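(* Let $Q=(q_0,\ldots,q_n)$ be a weights vector and let $V=(\mathbf{v}_0,\mathbf{v}_1,\ldots,\mathbf{v}_n)\in\mathrm{Mat}(n,n+1;\mathbb{Z})$ be a fan matrix of $\mathbb{P}(Q)$, i.e. $\sum_{j=0}^nq_j\mathbf{v}_j=0$ and $|\det(\mathbf{v}_1,\ldots,\mathbf{v}_n)|=q_0$. Then the weighted transverse matrix $(V^0)^*_Q=((V^0)^{-1})^T\cdot\delta\,\mathrm{diag}(1/q_1,\ldots,1/q_n)$, where $V^0=(\mathbf{v}_1,\ldots,\mathbf{v}_n)$ and $\delta=\mathrm{lcm}(q_0,\ldots,q_n)$, has integer entries.
   Context: A weights vector is an $(n+1)$-tuple of positive integers with gcd $1$. *)

theory Defs
  imports "HOL-Analysis.Analysis"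
begin

text \<open>Dimension n is the cardinality of the finite index type 'n. A weights vector
  Q = (q_0,...,q_n) is represented by q0 :: nat and q :: 'n \<Rightarrow> nat (q_1..q_n).
  A fan matrix V = (v_0,...,v_n) is represented by v0 :: int^'n and v :: 'n \<Rightarrow> int^'n.\<close>

definition weights_vector :: "nat \<Rightarrow> ('n::finite \<Rightarrow> nat) \<Rightarrow> bool" where
  "weights_vector q0 q \<longleftrightarrow> q0 > 0 \<and> (\<forall>j. q j > 0) \<and> Gcd (insert q0 (range q)) = 1"

definition is_fan_matrix :: "nat \<Rightarrow> ('n::finite \<Rightarrow> nat) \<Rightarrow> int^'n \<Rightarrow> ('n \<Rightarrow> int^'n) \<Rightarrow> bool" where
  "is_fan_matrix q0 q v0 v \<longleftrightarrow>
     of_nat q0 *s v0 + (\<Sum>j\<in>UNIV. of_nat (q j) *s v j) = 0 \<and>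
     \<bar>det (\<chi> i j. v j $ i)\<bar> = int q0"

definition V0_matrix :: "('n::finite \<Rightarrow> int^'n) \<Rightarrow> int^'n^'n" where
  "V0_matrix v = (\<chi> i j. v j $ i)"

definition weight_lcm :: "nat \<Rightarrow> ('n::finite \<Rightarrow> nat) \<Rightarrow> nat" where
  "weight_lcm q0 q = Lcm (insert q0 (range q))"

definition weighted_transverse_matrix ::
  "nat \<Rightarrow> ('n::finite \<Rightarrow> nat) \<Rightarrow> ('n \<Rightarrow> int^'n) \<Rightarrow> real^'n^'n" where
  "weighted_transverse_matrix q0 q v =
     transpose (matrix_inv ((\<chi> i j. real_of_int (V0_matrix v $ i $ j)))) **
     (real (weight_lcm q0 q) *\<^sub>R (\<chi> i j. if i = j then 1 / real (q j) else 0))"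

end

theory Submission
  imports Defs
begin

text \<open>The \<open>j\<close>-th column of \<open>(V\<^sup>0)\<^sup>*\<^sub>Q\<close> is the functional \<open>p\<^sub>j = (\<delta>/q\<^sub>j) \<phi>\<^sub>j\<close>, where
  \<open>\<phi>\<^sub>1, \<dots>, \<phi>\<^sub>n\<close> is the basis dual to \<open>v\<^sub>1, \<dots>, v\<^sub>n\<close>. Each \<open>p\<^sub>j\<close> is integral on
  \<open>v\<^sub>1, \<dots>, v\<^sub>n\<close>, and the relation \<open>\<Sum> q\<^sub>k v\<^sub>k = 0\<close> gives \<open>p\<^sub>j(v\<^sub>0) = -\<delta>/q\<^sub>0\<close>.
  Dropping \<open>v\<^sub>k\<close> from \<open>v\<^sub>0, \<dots>, v\<^sub>n\<close> leaves a matrix of determinant \<open>\<plusminus>q\<^sub>k\<close>, so by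
  Cramer's rule \<open>q\<^sub>k e\<^sub>i\<close> is an integer combination of the \<open>v\<^sub>l\<close> and \<open>q\<^sub>k p\<^sub>j(e\<^sub>i) \<in> \<int>\<close>
  for every \<open>k\<close>. As the weights are coprime, \<open>p\<^sub>j(e\<^sub>i) \<in> \<int>\<close>.\<close>

definition of_int_vec :: "int^'n \<Rightarrow> real^'n" where
  "of_int_vec x = (\<chi> i. real_of_int (x $ i))"

definition of_int_mat :: "int^'n^'m \<Rightarrow> real^'n^'m" where
  "of_int_mat M = (\<chi> i j. real_of_int (M $ i $ j))"

lemma det_of_int_mat: "det (of_int_mat M) = real_of_int (det M)"
  unfolding det_def of_int_mat_def by (simp add: of_int_sum of_int_prod)

lemma det_Ints:
  fixes M :: "real^'n::finite^'n"
  assumes "\<And>i j. M $ i $ j \<in> \<int>"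
  shows "det M \<in> \<int>"
  unfolding det_def using assms by (intro Ints_sum Ints_mult Ints_prod) auto

lemma abs_mult_Ints:
  fixes d x :: real
  assumes "d * x \<in> \<int>"
  shows "\<bar>d\<bar> * x \<in> \<int>"
  using assms by (cases "d \<ge> 0") (auto simp: Ints_minus)

lemma mult_Gcd_Ints:
  fixes r :: real
  assumes "finite S" "\<forall>m\<in>S. r * real m \<in> \<int>"
  shows "r * real (Gcd S) \<in> \<int>"
  using assms
proof (induction S rule: finite_induct)
  case empty
  then show ?case by simp
next
  case (insert a A)
  then have ha: "r * real a \<in> \<int>" and hA: "r * real (Gcd A) \<in> \<int>" by auto
  obtain u v :: int where "u * int a + v * int (Gcd A) = int (gcd a (Gcd A))"
    using bezout_int by (metis gcd_int_int_eq)
  then have "real (gcd a (Gcd A)) = real_of_int u * real a + real_of_int v * real (Gcd A)"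
    by (metis of_int_add of_int_mult of_int_of_nat_eq)
  then have "r * real (Gcd (insert a A))
      = real_of_int u * (r * real a) + real_of_int v * (r * real (Gcd A))"
    by (simp add: algebra_simps)
  also have "\<dots> \<in> \<int>" using ha hA by (metis Ints_add Ints_mult Ints_of_int)
  finally show ?case .
qed

lemma of_nat_div_Ints: "m dvd n \<Longrightarrow> real n / real m \<in> \<int>"
  by (metis Ints_of_nat real_of_nat_div)

text \<open>By Cramer's rule \<open>det M \<cdot> b\<close> is an integer combination of the columns of \<open>M\<close>.\<close>
lemma det_mult_inner_Ints:
  fixes M :: "real^'n::finite^'n" and b p :: "real^'n"
  assumes M_Ints: "\<And>i j. M $ i $ j \<in> \<int>" and b_Ints: "\<And>i. b $ i \<in> \<int>"
    and columns: "\<And>l. p \<bullet> column l M \<in> \<int>"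
  shows "det M * (p \<bullet> b) \<in> \<int>"
proof (cases "det M = 0")
  case False
  define y :: "real^'n" where "y = (\<chi> k. det (\<chi> i j. if j = k then b $ i else M $ i $ j) / det M)"
  have My: "M *v y = b"
    using cramer[OF False] unfolding y_def by simp
  have "p \<bullet> b = (\<Sum>l\<in>UNIV. y $ l * (p \<bullet> column l M))"
    unfolding My[symmetric] matrix_mult_sum scalar_mult_eq_scaleR inner_sum_right by simp
  then have "det M * (p \<bullet> b) = (\<Sum>l\<in>UNIV. (det M * y $ l) * (p \<bullet> column l M))"
    by (simp add: sum_distrib_left mult.assoc)
  also have "\<dots> \<in> \<int>"
  proof (intro Ints_sum)
    fix l
    have "det (\<chi> i j. if j = l then b $ i else M $ i $ j) \<in> \<int>"
      by (rule det_Ints) (simp add: M_Ints b_Ints)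
    then have "det M * y $ l \<in> \<int>"
      using False unfolding y_def by simp
    then show "(det M * y $ l) * (p \<bullet> column l M) \<in> \<int>"
      using columns by (rule Ints_mult)
  qed
  finally show ?thesis .
qed simp

lemma matrix_inv_left:
  fixes A :: "'a::field^'n::finite^'n"
  assumes "det A \<noteq> 0"
  shows "matrix_inv A ** A = mat 1"
  using assms unfolding invertible_det_nz[symmetric] invertible_def matrix_inv_def
  by (metis (mono_tags, lifting) someI_ex)

lemma row_matrix_inv_inner_column:
  fixes A :: "real^'n::finite^'n"
  assumes "det A \<noteq> 0"
  shows "row j (matrix_inv A) \<bullet> column l A = (if j = l then 1 else 0)"
proof -
  have "row j (matrix_inv A) \<bullet> column l A = (matrix_inv A ** A) $ j $ l"
    by (simp add: inner_vec_def row_def column_def matrix_matrix_mult_def)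
  then show ?thesis
    using matrix_inv_left[OF assms] by (simp add: mat_def)
qed

lemma inner_component_Ints_of_fan:
  fixes A :: "real^'n::finite^'n" and b0 p :: "real^'n" and q0 :: nat and q :: "'n \<Rightarrow> nat"
  assumes A_Ints: "\<And>i j. A $ i $ j \<in> \<int>" and b0_Ints: "\<And>i. b0 $ i \<in> \<int>"
    and relation: "real q0 *\<^sub>R b0 + (\<Sum>l\<in>UNIV. real (q l) *\<^sub>R column l A) = 0"
    and det_A: "\<bar>det A\<bar> = real q0" and "q0 > 0"
    and coprime: "Gcd (insert q0 (range q)) = 1"
    and columns: "\<And>l. p \<bullet> column l A \<in> \<int>" and "p \<bullet> b0 \<in> \<int>"
  shows "p $ i \<in> \<int>"
proof -
  define e :: "real^'n" where "e = axis i 1"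
  have e_Ints: "e $ r \<in> \<int>" for r
    unfolding e_def axis_def by simp
  have p_e: "p \<bullet> e = p $ i"
    unfolding e_def by (simp add: inner_axis)
  have "real q0 * p $ i \<in> \<int>"
    using abs_mult_Ints[OF det_mult_inner_Ints[OF A_Ints e_Ints columns]] det_A p_e by simp
  moreover have "real (q k) * p $ i \<in> \<int>" for k
  proof -
    define u :: "real^'n" where "u = (\<chi> l. - real (q l) / real q0)"
    have "A *v u = b0"
    proof -
      have "real q0 *\<^sub>R (A *v u) = - (\<Sum>l\<in>UNIV. real (q l) *\<^sub>R column l A)"
        using \<open>q0 > 0\<close> unfolding matrix_mult_sum scalar_mult_eq_scaleR u_def
        by (simp add: scaleR_sum_right sum_negf)
      also have "\<dots> = real q0 *\<^sub>R b0"
        using relation by (simp add: add_eq_0_iff)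
      finally show ?thesis using \<open>q0 > 0\<close> by simp
    qed
    define B where "B = (\<chi> i j. if j = k then b0 $ i else A $ i $ j)"
    have "det B = u $ k * det A"
      using cramer_lemma[of k A u] unfolding B_def \<open>A *v u = b0\<close> .
    then have det_B: "\<bar>det B\<bar> = real (q k)"
      using det_A \<open>q0 > 0\<close> unfolding u_def by (simp add: abs_mult)
    have B_Ints: "B $ r $ s \<in> \<int>" for r s
      unfolding B_def by (simp add: A_Ints b0_Ints)
    have "p \<bullet> column l B \<in> \<int>" for l
      using columns \<open>p \<bullet> b0 \<in> \<int>\<close> by (cases "l = k") (simp_all add: B_def column_def)
    then have "det B * (p \<bullet> e) \<in> \<int>"
      by (rule det_mult_inner_Ints[OF B_Ints e_Ints])
    then show ?thesis
      using abs_mult_Ints det_B p_e by metis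
  qed
  ultimately have "p $ i * real (Gcd (insert q0 (range q))) \<in> \<int>"
    by (intro mult_Gcd_Ints) (auto simp: mult.commute)
  then show ?thesis
    using coprime by simp
qed

lemma scaled_inverse_row_inner_Ints:
  fixes A :: "real^'n::finite^'n" and b0 :: "real^'n" and q0 \<delta> :: nat and q :: "'n \<Rightarrow> nat"
    and j :: 'n
  defines "p \<equiv> (real \<delta> / real (q j)) *\<^sub>R row j (matrix_inv A)"
  assumes relation: "real q0 *\<^sub>R b0 + (\<Sum>l\<in>UNIV. real (q l) *\<^sub>R column l A) = 0"
    and "det A \<noteq> 0" and "q0 > 0" and "q j > 0"
    and "q0 dvd \<delta>" and q_dvd: "\<And>l. q l dvd \<delta>"
  shows "p \<bullet> column l A \<in> \<int>" and "p \<bullet> b0 \<in> \<int>"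
proof -
  have p_column: "p \<bullet> column l A = (if l = j then real \<delta> / real (q j) else 0)" for l
    unfolding p_def using row_matrix_inv_inner_column[OF \<open>det A \<noteq> 0\<close>] by auto
  then show "p \<bullet> column l A \<in> \<int>"
    using of_nat_div_Ints[OF q_dvd] by simp
  have "real q0 * (p \<bullet> b0) + (\<Sum>l\<in>UNIV. real (q l) * (p \<bullet> column l A)) = 0"
    using arg_cong[OF relation, of "inner p"] by (simp add: inner_add_right inner_sum_right)
  then have "real q0 * (p \<bullet> b0) = - real \<delta>"
    using \<open>q j > 0\<close> by (simp add: p_column if_distrib cong: if_cong)
  then have "p \<bullet> b0 = - (real \<delta> / real q0)"
    using \<open>q0 > 0\<close> by (simp add: field_simps)
  then show "p \<bullet> b0 \<in> \<int>"
    using of_nat_div_Ints[OF \<open>q0 dvd \<delta>\<close>] by simp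
qed

lemma of_int_fan_matrix:
  assumes "is_fan_matrix q0 q v0 v"
  shows "real q0 *\<^sub>R of_int_vec v0
      + (\<Sum>l\<in>UNIV. real (q l) *\<^sub>R column l (of_int_mat (V0_matrix v))) = 0"
    and "\<bar>det (of_int_mat (V0_matrix v))\<bar> = real q0"
proof -
  have "of_nat q0 *s v0 + (\<Sum>l\<in>UNIV. of_nat (q l) *s v l) = 0"
    and det_V: "\<bar>det (V0_matrix v)\<bar> = int q0"
    using assms unfolding is_fan_matrix_def V0_matrix_def by auto
  then have "int q0 * v0 $ r + (\<Sum>l\<in>UNIV. int (q l) * v l $ r) = 0" for r
    by (metis (no_types, lifting) sum_component vector_add_component vector_smult_component
        zero_index sum.cong)
  then have "real_of_int (int q0 * v0 $ r + (\<Sum>l\<in>UNIV. int (q l) * v l $ r)) = 0" for r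
    by simp
  then show "real q0 *\<^sub>R of_int_vec v0
      + (\<Sum>l\<in>UNIV. real (q l) *\<^sub>R column l (of_int_mat (V0_matrix v))) = 0"
    by (simp add: vec_eq_iff sum_component of_int_sum of_int_vec_def of_int_mat_def column_def
        V0_matrix_def)
  show "\<bar>det (of_int_mat (V0_matrix v))\<bar> = real q0"
    using det_V by (simp add: det_of_int_mat flip: of_int_abs)
qed

lemma weighted_transverse_matrix_entry:
  "weighted_transverse_matrix q0 q v $ i $ j
     = ((real (weight_lcm q0 q) / real (q j)) *\<^sub>R row j (matrix_inv (of_int_mat (V0_matrix v)))) $ i"
  unfolding weighted_transverse_matrix_def of_int_mat_def[symmetric]
  by (simp add: matrix_matrix_mult_def transpose_def row_def if_distrib cong: if_cong)

theorem mainTheorem11: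
  fixes q0 :: nat and q :: "'n::finite \<Rightarrow> nat" and v0 :: "int^'n" and v :: "'n \<Rightarrow> int^'n"
  assumes "weights_vector q0 q"
    and "is_fan_matrix q0 q v0 v"
  shows "\<forall>i j. weighted_transverse_matrix q0 q v $ i $ j \<in> \<int>"
proof (intro allI)
  fix i j
  define A where "A = of_int_mat (V0_matrix v)"
  define \<delta> where "\<delta> = weight_lcm q0 q"
  have "q0 > 0" and "\<And>l. q l > 0" and coprime: "Gcd (insert q0 (range q)) = 1"
    using assms(1) unfolding weights_vector_def by auto
  have "q0 dvd \<delta>" and "\<And>l. q l dvd \<delta>"
    unfolding \<delta>_def weight_lcm_def by (simp_all add: dvd_Lcm)
  note relation = of_int_fan_matrix(1)[OF assms(2), folded A_def]
  have det_A: "\<bar>det A\<bar> = real q0"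
    using of_int_fan_matrix(2)[OF assms(2)] unfolding A_def .
  with \<open>q0 > 0\<close> have "det A \<noteq> 0" by auto
  have A_Ints: "A $ r $ l \<in> \<int>" and b0_Ints: "of_int_vec v0 $ r \<in> \<int>" for r l
    unfolding A_def of_int_mat_def of_int_vec_def by simp_all
  note dual_Ints = scaled_inverse_row_inner_Ints[OF relation \<open>det A \<noteq> 0\<close> \<open>q0 > 0\<close> \<open>q j > 0\<close>
      \<open>q0 dvd \<delta>\<close> \<open>\<And>l. q l dvd \<delta>\<close>]
  show "weighted_transverse_matrix q0 q v $ i $ j \<in> \<int>"
    unfolding weighted_transverse_matrix_entry A_def[symmetric] \<delta>_def[symmetric]
    using inner_component_Ints_of_fan[OF A_Ints b0_Ints relation det_A \<open>q0 > 0\<close> coprime dual_Ints] .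
qed

end
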